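(* Let $\mathcal{C}$ be a strict monoidal category and $\mathcal{C}'$ a monoidal subcategory. Suppose there is an associative operation $\circledast\colon\mathrm{Hom}_\mathcal{C}(A,V)\otimes\mathrm{Hom}_\mathcal{C}(B,W)\to\mathrm{Hom}_\mathcal{C}(A\otimes B,V\otimes W)$ for all $A,B\in\mathrm{Ob}\,\mathcal{C}$, $V,W\in\mathrm{Ob}\,\mathcal{C}'$, which is natural in its $\mathcal{C}$-arguments, i.e. $(\phi\circ\alpha)\circledast(\psi\circ\beta)=(\phi\circledast\psi)\circ(\alpha\otimes\beta)$ for $\phi\in\mathrm{Hom}_\mathcal{C}(A,V)$, $\psi\in\mathrm{Hom}_\mathcal{C}(B,W)$, $\alpha,\beta$ morphisms of $\mathcal{C}$, and unital, i.e. $\phi\circledast\chi=\phi\otimes\chi$ and $\chi\circledast\phi=\chi\otimes\phi$ for every morphism $\phi$ and every $\chi\in\mathrm{Hom}_\mathcal{C}(B,1_\mathcal{C})$. Then the family $F_{V,W}:=\mathrm{id}_V\circledast\mathrm{id}_W\in\mathrm{End}_\mathcal{C}(V\otimes W)$, $V,W\in\mathrm{Ob}\,\mathcal{C}'$, is a cocycle in $\mathcal{C}'$. Moreover, this cocycle respects the morphisms of a subcategory $\mathcal{C}''\subset\mathcal{C}'$ if and only if $\circledast$ is natural with respect to $\mathcal{C}''$-arguments: $(\zeta\circ\phi)\circledast(\eta\circ\psi)=(\zeta\otimes\eta)\circ(\phi\circledast\psi)$ for $\phi\in\mathrm{Hom}_\mathcal{C}(A,V)$, $\psi\in\mathrm{Hom}_\mathcal{C}(B,W)$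 and $\zeta,\eta$ morphisms of $\mathcal{C}''$.
   Context: A cocycle (in the sense used here) is a family $F_{V,W}$ of morphisms of $V\otimes W$ satisfying $F_{U\otimes V,W}\circ(F_{U,V}\otimes\mathrm{id}_W)=F_{U,V\otimes W}\circ(\mathrm{id}_U\otimes F_{V,W})$ and $F_{V,1}=\mathrm{id}_V=F_{1,V}$, $1=1_\mathcal{C}$ the unit object. It respects morphisms of $\mathcal{C}''$ if $F_{V',W'}\circ(\zeta\otimes\eta)=(\zeta\otimes\eta)\circ F_{V,W}$ for all morphisms $\zeta\colon V\to V'$, $\eta\colon W\to W'$ of $\mathcal{C}''$. *)

theory Defs
  imports Main
begin

text \<open>A (possibly large-carrier) category is given by a set of objects, a set of
morphisms, source and target maps, a (partial, only meaningful on composable pairs)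
composition cmp g f = g o f, identities, and a strict tensor product on objects and
morphisms together with a unit object.\<close>

record ('o, 'm) smcat =
  obj :: "'o set"
  mor :: "'m set"
  src :: "'m \<Rightarrow> 'o"
  tgt :: "'m \<Rightarrow> 'o"
  cmp :: "'m \<Rightarrow> 'm \<Rightarrow> 'm"
  ident :: "'o \<Rightarrow> 'm"
  tobj :: "'o \<Rightarrow> 'o \<Rightarrow> 'o"
  tmor :: "'m \<Rightarrow> 'm \<Rightarrow> 'm"
  unit_obj :: "'o"

definition hom :: "('o, 'm) smcat \<Rightarrow> 'o \<Rightarrow> 'o \<Rightarrow> 'm set" where
  "hom C A B = {f \<in> mor C. src C f = A \<and> tgt C f = B}"

definition is_category :: "('o, 'm) smcat \<Rightarrow> bool" where
  "is_category C \<longleftrightarrow>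
     (\<forall>f \<in> mor C. src C f \<in> obj C \<and> tgt C f \<in> obj C) \<and>
     (\<forall>A \<in> obj C. ident C A \<in> hom C A A) \<and>
     (\<forall>f \<in> mor C. \<forall>g \<in> mor C. tgt C f = src C g \<longrightarrow>
        cmp C g f \<in> hom C (src C f) (tgt C g)) \<and>
     (\<forall>f \<in> mor C. cmp C f (ident C (src C f)) = f \<and> cmp C (ident C (tgt C f)) f = f) \<and>
     (\<forall>f \<in> mor C. \<forall>g \<in> mor C. \<forall>h \<in> mor C.
        tgt C f = src C g \<longrightarrow> tgt C g = src C h \<longrightarrow>
        cmp C h (cmp C g f) = cmp C (cmp C h g) f)"

definition strict_monoidal_category :: "('o, 'm) smcat \<Rightarrow> bool" where
  "strict_monoidal_category C \<longleftrightarrow>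
     is_category C \<and>
     unit_obj C \<in> obj C \<and>
     (\<forall>A \<in> obj C. \<forall>B \<in> obj C. tobj C A B \<in> obj C) \<and>
     (\<forall>f \<in> mor C. \<forall>g \<in> mor C.
        tmor C f g \<in> hom C (tobj C (src C f) (src C g)) (tobj C (tgt C f) (tgt C g))) \<and>
     (\<forall>A \<in> obj C. \<forall>B \<in> obj C. tmor C (ident C A) (ident C B) = ident C (tobj C A B)) \<and>
     (\<forall>f \<in> mor C. \<forall>f' \<in> mor C. \<forall>g \<in> mor C. \<forall>g' \<in> mor C.
        tgt C f = src C f' \<longrightarrow> tgt C g = src C g' \<longrightarrow>
        tmor C (cmp C f' f) (cmp C g' g) = cmp C (tmor C f' g') (tmor C f g)) \<and>
     (\<forall>A \<in> obj C. \<forall>B \<in> obj C. \<forall>D \<in> obj C.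
        tobj C (tobj C A B) D = tobj C A (tobj C B D)) \<and>
     (\<forall>f \<in> mor C. \<forall>g \<in> mor C. \<forall>h \<in> mor C.
        tmor C (tmor C f g) h = tmor C f (tmor C g h)) \<and>
     (\<forall>A \<in> obj C. tobj C (unit_obj C) A = A \<and> tobj C A (unit_obj C) = A) \<and>
     (\<forall>f \<in> mor C. tmor C (ident C (unit_obj C)) f = f \<and> tmor C f (ident C (unit_obj C)) = f)"

definition subcategory :: "('o, 'm) smcat \<Rightarrow> 'o set \<Rightarrow> 'm set \<Rightarrow> bool" where
  "subcategory C Ob' Mor' \<longleftrightarrow>
     Ob' \<subseteq> obj C \<and> Mor' \<subseteq> mor C \<and>
     (\<forall>f \<in> Mor'. src C f \<in> Ob' \<and> tgt C f \<in> Ob') \<and>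
     (\<forall>A \<in> Ob'. ident C A \<in> Mor') \<and>
     (\<forall>f \<in> Mor'. \<forall>g \<in> Mor'. tgt C f = src C g \<longrightarrow> cmp C g f \<in> Mor')"

definition monoidal_subcategory :: "('o, 'm) smcat \<Rightarrow> 'o set \<Rightarrow> 'm set \<Rightarrow> bool" where
  "monoidal_subcategory C Ob' Mor' \<longleftrightarrow>
     subcategory C Ob' Mor' \<and>
     unit_obj C \<in> Ob' \<and>
     (\<forall>A \<in> Ob'. \<forall>B \<in> Ob'. tobj C A B \<in> Ob') \<and>
     (\<forall>f \<in> Mor'. \<forall>g \<in> Mor'. tmor C f g \<in> Mor')"

definition cocycle :: "('o, 'm) smcat \<Rightarrow> 'o set \<Rightarrow> ('o \<Rightarrow> 'o \<Rightarrow> 'm) \<Rightarrow> bool" where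
  "cocycle C Ob' F \<longleftrightarrow>
     (\<forall>V \<in> Ob'. \<forall>W \<in> Ob'. F V W \<in> hom C (tobj C V W) (tobj C V W)) \<and>
     (\<forall>U \<in> Ob'. \<forall>V \<in> Ob'. \<forall>W \<in> Ob'.
        cmp C (F (tobj C U V) W) (tmor C (F U V) (ident C W))
        = cmp C (F U (tobj C V W)) (tmor C (ident C U) (F V W))) \<and>
     (\<forall>V \<in> Ob'. F V (unit_obj C) = ident C V \<and> F (unit_obj C) V = ident C V)"

definition respects_morphisms :: "('o, 'm) smcat \<Rightarrow> 'm set \<Rightarrow> ('o \<Rightarrow> 'o \<Rightarrow> 'm) \<Rightarrow> bool" where
  "respects_morphisms C Mor'' F \<longleftrightarrow>
     (\<forall>\<zeta> \<in> Mor''. \<forall>\<eta> \<in> Mor''.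
        cmp C (F (tgt C \<zeta>) (tgt C \<eta>)) (tmor C \<zeta> \<eta>)
        = cmp C (tmor C \<zeta> \<eta>) (F (src C \<zeta>) (src C \<eta>)))"

definition star_typed :: "('o, 'm) smcat \<Rightarrow> 'o set \<Rightarrow> ('m \<Rightarrow> 'm \<Rightarrow> 'm) \<Rightarrow> bool" where
  "star_typed C Ob' op \<longleftrightarrow>
     (\<forall>A \<in> obj C. \<forall>B \<in> obj C. \<forall>V \<in> Ob'. \<forall>W \<in> Ob'. \<forall>\<phi> \<in> hom C A V. \<forall>\<psi> \<in> hom C B W.
        op \<phi> \<psi> \<in> hom C (tobj C A B) (tobj C V W))"

definition star_assoc :: "('o, 'm) smcat \<Rightarrow> 'o set \<Rightarrow> ('m \<Rightarrow> 'm \<Rightarrow> 'm) \<Rightarrow> bool" where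
  "star_assoc C Ob' op \<longleftrightarrow>
     (\<forall>\<phi> \<in> mor C. \<forall>\<psi> \<in> mor C. \<forall>\<xi> \<in> mor C.
        tgt C \<phi> \<in> Ob' \<longrightarrow> tgt C \<psi> \<in> Ob' \<longrightarrow> tgt C \<xi> \<in> Ob' \<longrightarrow>
        op (op \<phi> \<psi>) \<xi> = op \<phi> (op \<psi> \<xi>))"

definition star_natural_C :: "('o, 'm) smcat \<Rightarrow> 'o set \<Rightarrow> ('m \<Rightarrow> 'm \<Rightarrow> 'm) \<Rightarrow> bool" where
  "star_natural_C C Ob' op \<longleftrightarrow>
     (\<forall>\<phi> \<in> mor C. \<forall>\<psi> \<in> mor C. \<forall>\<alpha> \<in> mor C. \<forall>\<beta> \<in> mor C.
        tgt C \<phi> \<in> Ob' \<longrightarrow> tgt C \<psi> \<in> Ob' \<longrightarrow>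
        tgt C \<alpha> = src C \<phi> \<longrightarrow> tgt C \<beta> = src C \<psi> \<longrightarrow>
        op (cmp C \<phi> \<alpha>) (cmp C \<psi> \<beta>) = cmp C (op \<phi> \<psi>) (tmor C \<alpha> \<beta>))"

definition star_unital :: "('o, 'm) smcat \<Rightarrow> 'o set \<Rightarrow> ('m \<Rightarrow> 'm \<Rightarrow> 'm) \<Rightarrow> bool" where
  "star_unital C Ob' op \<longleftrightarrow>
     (\<forall>\<phi> \<in> mor C. \<forall>\<chi> \<in> mor C.
        tgt C \<phi> \<in> Ob' \<longrightarrow> tgt C \<chi> = unit_obj C \<longrightarrow>
        op \<phi> \<chi> = tmor C \<phi> \<chi> \<and> op \<chi> \<phi> = tmor C \<chi> \<phi>)"

definition star_natural_sub :: "('o, 'm) smcat \<Rightarrow> 'm set \<Rightarrow> ('m \<Rightarrow> 'm \<Rightarrow> 'm) \<Rightarrow> bool" where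
  "star_natural_sub C Mor'' op \<longleftrightarrow>
     (\<forall>\<phi> \<in> mor C. \<forall>\<psi> \<in> mor C. \<forall>\<zeta> \<in> Mor''. \<forall>\<eta> \<in> Mor''.
        tgt C \<phi> = src C \<zeta> \<longrightarrow> tgt C \<psi> = src C \<eta> \<longrightarrow>
        op (cmp C \<zeta> \<phi>) (cmp C \<eta> \<psi>) = cmp C (tmor C \<zeta> \<eta>) (op \<phi> \<psi>))"

end

theory Submission
  imports Defs
begin

text \<open>Naturality in the \<open>\<C>\<close>-arguments factors every product as
\<open>\<phi> \<circledast> \<psi> = F\<^sub>V\<^sub>,\<^sub>W \<circ> (\<phi> \<otimes> \<psi>)\<close>, where \<open>F\<^sub>V\<^sub>,\<^sub>W = id\<^sub>V \<circledast> id\<^sub>W\<close>.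
The cocycle identity is then associativity of \<open>\<circledast>\<close> evaluated on three identities,
normalisation is unitality, and \<open>F\<close> commutes with \<open>\<zeta> \<otimes> \<eta>\<close> exactly when
\<open>(\<zeta> \<circ> \<phi>) \<circledast> (\<eta> \<circ> \<psi>) = (\<zeta> \<otimes> \<eta>) \<circ> (\<phi> \<circledast> \<psi>)\<close>, because by the factorisation both sides
of each identity are the two ways of composing \<open>F\<close> with \<open>\<zeta> \<otimes> \<eta>\<close>.\<close>

abbreviation (input) star_cocycle :: "('o, 'm) smcat \<Rightarrow> ('m \<Rightarrow> 'm \<Rightarrow> 'm) \<Rightarrow> 'o \<Rightarrow> 'o \<Rightarrow> 'm" where
  "star_cocycle C op V W \<equiv> op (ident C V) (ident C W)"

lemma category_src_tgt_obj:
  "is_category C \<Longrightarrow> f \<in> hom C A B \<Longrightarrow> A \<in> obj C \<and> B \<in> obj C"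
  unfolding is_category_def hom_def by blast

lemma category_ident_hom: "is_category C \<Longrightarrow> A \<in> obj C \<Longrightarrow> ident C A \<in> hom C A A"
  unfolding is_category_def by blast

lemma category_comp_ident_left:
  "is_category C \<Longrightarrow> f \<in> hom C A B \<Longrightarrow> cmp C (ident C B) f = f"
  unfolding is_category_def hom_def by auto

lemma category_comp_ident_right:
  "is_category C \<Longrightarrow> f \<in> hom C A B \<Longrightarrow> cmp C f (ident C A) = f"
  unfolding is_category_def hom_def by auto

lemma category_comp_assoc:
  "is_category C \<Longrightarrow> f \<in> hom C A B \<Longrightarrow> g \<in> hom C B D \<Longrightarrow> h \<in> hom C D E \<Longrightarrow>
    cmp C h (cmp C g f) = cmp C (cmp C h g) f"
  unfolding is_category_def hom_def by auto

lemma strict_monoidal_category_is_category: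
  "strict_monoidal_category C \<Longrightarrow> is_category C"
  by (simp add: strict_monoidal_category_def)

lemma strict_monoidal_tensor_hom:
  "strict_monoidal_category C \<Longrightarrow> f \<in> hom C A B \<Longrightarrow> g \<in> hom C A' B' \<Longrightarrow>
    tmor C f g \<in> hom C (tobj C A A') (tobj C B B')"
  unfolding strict_monoidal_category_def hom_def by auto

lemma strict_monoidal_tensor_ident_unit:
  assumes "strict_monoidal_category C" "V \<in> obj C"
  shows "tmor C (ident C V) (ident C (unit_obj C)) = ident C V"
    and "tmor C (ident C (unit_obj C)) (ident C V) = ident C V"
  using assms unfolding strict_monoidal_category_def by auto

lemma star_cocycle_hom:
  assumes "is_category C" "star_typed C Ob' op"
    and "V \<in> Ob'" "W \<in> Ob'" "V \<in> obj C" "W \<in> obj C"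
  shows "star_cocycle C op V W \<in> hom C (tobj C V W) (tobj C V W)"
  using assms category_ident_hom[OF assms(1)] unfolding star_typed_def by blast

lemma star_eq_star_cocycle_comp_tensor:
  assumes "is_category C" "star_natural_C C Ob' op"
    and "\<phi> \<in> hom C A V" "\<psi> \<in> hom C B W" "V \<in> Ob'" "W \<in> Ob'"
  shows "op \<phi> \<psi> = cmp C (star_cocycle C op V W) (tmor C \<phi> \<psi>)"
proof -
  have "ident C V \<in> hom C V V" "ident C W \<in> hom C W W"
    using assms category_ident_hom category_src_tgt_obj by metis+
  then have "op (cmp C (ident C V) \<phi>) (cmp C (ident C W) \<psi>)
      = cmp C (star_cocycle C op V W) (tmor C \<phi> \<psi>)"
    using assms(2-) unfolding star_natural_C_def hom_def by auto
  then show ?thesis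
    using assms category_comp_ident_left by metis
qed

lemma star_cocycle_identity:
  assumes C: "strict_monoidal_category C"
    and Ob': "Ob' \<subseteq> obj C" "\<forall>A \<in> Ob'. \<forall>B \<in> Ob'. tobj C A B \<in> Ob'"
    and "star_typed C Ob' op" "star_assoc C Ob' op" "star_natural_C C Ob' op"
    and UVW: "U \<in> Ob'" "V \<in> Ob'" "W \<in> Ob'"
  shows "cmp C (star_cocycle C op (tobj C U V) W) (tmor C (star_cocycle C op U V) (ident C W))
    = cmp C (star_cocycle C op U (tobj C V W)) (tmor C (ident C U) (star_cocycle C op V W))"
proof -
  let ?F = "star_cocycle C op"
  have cat: "is_category C"
    using C by (rule strict_monoidal_category_is_category)
  have idU: "ident C U \<in> hom C U U" and idW: "ident C W \<in> hom C W W"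
    using UVW Ob'(1) category_ident_hom[OF cat] by auto
  have "cmp C (?F (tobj C U V) W) (tmor C (?F U V) (ident C W)) = op (?F U V) (ident C W)"
    using star_eq_star_cocycle_comp_tensor[OF cat \<open>star_natural_C C Ob' op\<close>]
      star_cocycle_hom[OF cat \<open>star_typed C Ob' op\<close>] idW UVW Ob' by (metis subsetD)
  also have "\<dots> = op (ident C U) (?F V W)"
    using \<open>star_assoc C Ob' op\<close> idU idW UVW Ob'(1) category_ident_hom[OF cat]
    unfolding star_assoc_def hom_def by auto
  also have "\<dots> = cmp C (?F U (tobj C V W)) (tmor C (ident C U) (?F V W))"
    using star_eq_star_cocycle_comp_tensor[OF cat \<open>star_natural_C C Ob' op\<close>]
      star_cocycle_hom[OF cat \<open>star_typed C Ob' op\<close>] idU UVW Ob' by (metis subsetD)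
  finally show ?thesis .
qed

lemma star_cocycle_unit:
  assumes "strict_monoidal_category C" "star_unital C Ob' op" "V \<in> Ob'" "V \<in> obj C"
  shows "star_cocycle C op V (unit_obj C) = ident C V"
    and "star_cocycle C op (unit_obj C) V = ident C V"
proof -
  have cat: "is_category C"
    using assms(1) by (rule strict_monoidal_category_is_category)
  have "unit_obj C \<in> obj C"
    using assms(1) unfolding strict_monoidal_category_def by blast
  then have "ident C V \<in> hom C V V" "ident C (unit_obj C) \<in> hom C (unit_obj C) (unit_obj C)"
    using assms(4) category_ident_hom[OF cat] by auto
  then show "star_cocycle C op V (unit_obj C) = ident C V"
    and "star_cocycle C op (unit_obj C) V = ident C V"
    using assms(2,3) strict_monoidal_tensor_ident_unit[OF assms(1,4)]
    unfolding star_unital_def hom_def by auto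
qed

lemma star_cocycle_is_cocycle:
  assumes "strict_monoidal_category C"
    and "Ob' \<subseteq> obj C" "\<forall>A \<in> Ob'. \<forall>B \<in> Ob'. tobj C A B \<in> Ob'"
    and "star_typed C Ob' op" "star_assoc C Ob' op" "star_natural_C C Ob' op"
    and "star_unital C Ob' op"
  shows "cocycle C Ob' (star_cocycle C op)"
proof -
  have "star_cocycle C op V W \<in> hom C (tobj C V W) (tobj C V W)" if "V \<in> Ob'" "W \<in> Ob'" for V W
    using star_cocycle_hom[OF strict_monoidal_category_is_category[OF assms(1)] assms(4) that]
      that assms(2) by blast
  then show ?thesis
    unfolding cocycle_def
    using star_cocycle_identity[OF assms(1-6)] star_cocycle_unit[OF assms(1,7)] assms(2)
    by (simp add: subset_iff)
qed

lemma star_natural_sub_if_respects_morphisms: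
  assumes C: "strict_monoidal_category C"
    and "star_typed C Ob' op" "star_natural_C C Ob' op"
    and Mor'': "Mor'' \<subseteq> (\<Union>V \<in> Ob'. \<Union>W \<in> Ob'. hom C V W)"
    and resp: "respects_morphisms C Mor'' (star_cocycle C op)"
  shows "star_natural_sub C Mor'' op"
  unfolding star_natural_sub_def
proof (intro ballI impI)
  fix \<phi> \<psi> \<zeta> \<eta>
  assume "\<phi> \<in> mor C" "\<psi> \<in> mor C" "\<zeta> \<in> Mor''" "\<eta> \<in> Mor''"
    and "tgt C \<phi> = src C \<zeta>" "tgt C \<psi> = src C \<eta>"
  let ?F = "star_cocycle C op"
  have cat: "is_category C"
    using C by (rule strict_monoidal_category_is_category)
  obtain V V' W W' where VW: "V \<in> Ob'" "V' \<in> Ob'" "W \<in> Ob'" "W' \<in> Ob'"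
    and \<zeta>: "\<zeta> \<in> hom C V V'" and \<eta>: "\<eta> \<in> hom C W W'"
    using Mor'' \<open>\<zeta> \<in> Mor''\<close> \<open>\<eta> \<in> Mor''\<close> by blast
  have \<phi>: "\<phi> \<in> hom C (src C \<phi>) V" and \<psi>: "\<psi> \<in> hom C (src C \<psi>) W"
    using \<open>\<phi> \<in> mor C\<close> \<open>\<psi> \<in> mor C\<close> \<open>tgt C \<phi> = src C \<zeta>\<close> \<open>tgt C \<psi> = src C \<eta>\<close> \<zeta> \<eta>
    unfolding hom_def by auto
  have F: "?F V W \<in> hom C (tobj C V W) (tobj C V W)"
    using star_cocycle_hom[OF cat \<open>star_typed C Ob' op\<close>] VW
      category_src_tgt_obj[OF cat \<zeta>] category_src_tgt_obj[OF cat \<eta>] by blast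
  have \<zeta>\<eta>: "tmor C \<zeta> \<eta> \<in> hom C (tobj C V W) (tobj C V' W')"
    and \<phi>\<psi>: "tmor C \<phi> \<psi> \<in> hom C (tobj C (src C \<phi>) (src C \<psi>)) (tobj C V W)"
    using strict_monoidal_tensor_hom[OF C] \<zeta> \<eta> \<phi> \<psi> by auto
  have "op (cmp C \<zeta> \<phi>) (cmp C \<eta> \<psi>) = cmp C (op \<zeta> \<eta>) (tmor C \<phi> \<psi>)"
    using \<open>star_natural_C C Ob' op\<close> \<open>\<phi> \<in> mor C\<close> \<open>\<psi> \<in> mor C\<close> \<zeta> \<eta> VW \<phi> \<psi>
    unfolding star_natural_C_def hom_def by auto
  also have "op \<zeta> \<eta> = cmp C (?F V' W') (tmor C \<zeta> \<eta>)"
    using star_eq_star_cocycle_comp_tensor[OF cat \<open>star_natural_C C Ob' op\<close> \<zeta> \<eta>] VW by blast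
  also have "\<dots> = cmp C (tmor C \<zeta> \<eta>) (?F V W)"
    using resp \<open>\<zeta> \<in> Mor''\<close> \<open>\<eta> \<in> Mor''\<close> \<zeta> \<eta> unfolding respects_morphisms_def hom_def by blast
  also have "cmp C \<dots> (tmor C \<phi> \<psi>) = cmp C (tmor C \<zeta> \<eta>) (cmp C (?F V W) (tmor C \<phi> \<psi>))"
    using category_comp_assoc[OF cat \<phi>\<psi> F \<zeta>\<eta>] by simp
  also have "cmp C (?F V W) (tmor C \<phi> \<psi>) = op \<phi> \<psi>"
    using star_eq_star_cocycle_comp_tensor[OF cat \<open>star_natural_C C Ob' op\<close> \<phi> \<psi>] VW by simp
  finally show "op (cmp C \<zeta> \<phi>) (cmp C \<eta> \<psi>) = cmp C (tmor C \<zeta> \<eta>) (op \<phi> \<psi>)" .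
qed

lemma respects_morphisms_if_star_natural_sub:
  assumes cat: "is_category C" and "star_natural_C C Ob' op"
    and Mor'': "Mor'' \<subseteq> (\<Union>V \<in> Ob'. \<Union>W \<in> Ob'. hom C V W)"
    and nat: "star_natural_sub C Mor'' op"
  shows "respects_morphisms C Mor'' (star_cocycle C op)"
  unfolding respects_morphisms_def
proof (intro ballI)
  fix \<zeta> \<eta> assume "\<zeta> \<in> Mor''" "\<eta> \<in> Mor''"
  then obtain V V' W W' where "V' \<in> Ob'" "W' \<in> Ob'"
    and \<zeta>: "\<zeta> \<in> hom C V V'" and \<eta>: "\<eta> \<in> hom C W W'"
    using Mor'' by blast
  have idV: "ident C V \<in> hom C V V" and idW: "ident C W \<in> hom C W W"
    using category_ident_hom[OF cat] category_src_tgt_obj[OF cat] \<zeta> \<eta> by blast+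
  have "cmp C (star_cocycle C op V' W') (tmor C \<zeta> \<eta>) = op \<zeta> \<eta>"
    using star_eq_star_cocycle_comp_tensor[OF cat \<open>star_natural_C C Ob' op\<close> \<zeta> \<eta>]
      \<open>V' \<in> Ob'\<close> \<open>W' \<in> Ob'\<close> by simp
  also have "\<dots> = op (cmp C \<zeta> (ident C V)) (cmp C \<eta> (ident C W))"
    using category_comp_ident_right[OF cat] \<zeta> \<eta> by simp
  also have "\<dots> = cmp C (tmor C \<zeta> \<eta>) (star_cocycle C op V W)"
    using nat \<open>\<zeta> \<in> Mor''\<close> \<open>\<eta> \<in> Mor''\<close> idV idW \<zeta> \<eta>
    unfolding star_natural_sub_def hom_def by auto
  finally show "cmp C (star_cocycle C op (tgt C \<zeta>) (tgt C \<eta>)) (tmor C \<zeta> \<eta>)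
      = cmp C (tmor C \<zeta> \<eta>) (star_cocycle C op (src C \<zeta>) (src C \<eta>))"
    using \<zeta> \<eta> unfolding hom_def by simp
qed

lemma respects_morphisms_iff_star_natural_sub:
  assumes "strict_monoidal_category C" "star_typed C Ob' op" "star_natural_C C Ob' op"
    and "Mor'' \<subseteq> (\<Union>V \<in> Ob'. \<Union>W \<in> Ob'. hom C V W)"
  shows "respects_morphisms C Mor'' (star_cocycle C op) \<longleftrightarrow> star_natural_sub C Mor'' op"
  using star_natural_sub_if_respects_morphisms[OF assms]
    respects_morphisms_if_star_natural_sub[OF strict_monoidal_category_is_category[OF assms(1)]
      assms(3,4)]
  by blast

theorem lemma6p1:
  fixes C :: "('o, 'm) smcat"
    and Ob' :: "'o set" and Mor' :: "'m set"
    and op :: "'m \<Rightarrow> 'm \<Rightarrow> 'm"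
  assumes "strict_monoidal_category C"
    and "monoidal_subcategory C Ob' Mor'"
    and "star_typed C Ob' op"
    and "star_assoc C Ob' op"
    and "star_natural_C C Ob' op"
    and "star_unital C Ob' op"
  shows "cocycle C Ob' (\<lambda>V W. op (ident C V) (ident C W))
    \<and> (\<forall>(Ob'' :: 'o set) (Mor'' :: 'm set).
         subcategory C Ob'' Mor'' \<and> Ob'' \<subseteq> Ob' \<and> Mor'' \<subseteq> Mor' \<longrightarrow>
         (respects_morphisms C Mor'' (\<lambda>V W. op (ident C V) (ident C W))
          \<longleftrightarrow> star_natural_sub C Mor'' op))"
proof -
  have Ob': "Ob' \<subseteq> obj C" "\<forall>A \<in> Ob'. \<forall>B \<in> Ob'. tobj C A B \<in> Ob'"
    and Mor': "Mor' \<subseteq> (\<Union>V \<in> Ob'. \<Union>W \<in> Ob'. hom C V W)"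
    using assms(2) unfolding monoidal_subcategory_def subcategory_def hom_def by auto
  have "respects_morphisms C Mor'' (star_cocycle C op) \<longleftrightarrow> star_natural_sub C Mor'' op"
    if "Mor'' \<subseteq> Mor'" for Mor''
    using respects_morphisms_iff_star_natural_sub[OF assms(1,3,5)] that Mor' by (meson order_trans)
  then show ?thesis
    using star_cocycle_is_cocycle[OF assms(1) Ob' assms(3-6)] by simp
qed

end
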